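(* In the iPALM setting described in the context, suppose $\beta_k=\beta_0\sigma^k$ and $\rho_k=\rho_0\sigma^{-k}$ for all $k\ge0$, with $\beta_0>0$, $\rho_0>0$, $\sigma>1$. Then for every $k\ge0$, $$\sqrt{\beta_0\rho_0\|x^{(k+1)}-x^*\|^2+\|\lambda^{(k+1)}-\lambda^*\|^2}\le\sum_{i=0}^k\frac{2\beta_i\bar\varepsilon_i}{\sqrt{\beta_0\rho_0}}+\sqrt{\beta_0\rho_0\|x^{(0)}-x^*\|^2+\|\lambda^{(0)}-\lambda^*\|^2}.$$
   Context: iPALM setting. Consider $\min_x G(x):=f(x)+r(x)$ subject to $A_Ex=b_E$, $A_Ix\le b_I$, where $f:\mathbb R^n\to\mathbb R$ is convex, differentiable with $L_f$-Lipschitz gradient and $\mu$-strongly convex ($\mu\ge0$), and $r$ is proper closed convex. Write $A=[A_E;A_I]$, $b=[b_E;b_I]$, and multipliers $\lambda=[\lambda_E;\lambda_I]$. Assume $(x^*,\lambda^* )$ satisfies the KKT conditions $0\in\partial G(x^* )+A^\top\lambda^*$, $A_Ex^*=b_E$, $A_Ix^*\le b_I$, $\lambda_I^*\ge0$, $\langle\lambda_I^*,A_Ix^*-b_I\rangle=0$. The augmented Lagrangian is $\mathcal L_\beta(x,\lambda)=G(x)+\langle\lambda_E,A_Ex-b_E\rangle+\frac\beta2\|A_Ex-b_E\|^2+\frac1{2\beta}\big(\|[\beta(A_Ix-b_I)+\lambda_I]_+\|^2-\|\lambda_I\|^2\big)$, with $[\cdot]_+$ the componentwise positive part. Given $x^{(0)}\in\mathrm{dom}(G)$,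 $\lambda^{(0)}$, and positive numbers $\beta_k,\rho_k$ and $\bar\varepsilon_k\ge0$, the iPALM iterates satisfy for each $k\ge0$: with $\Psi_k(x)=\mathcal L_{\beta_k}(x,\lambda^{(k)})+\frac{\rho_k}2\|x-x^{(k)}\|^2$, the point $x^{(k+1)}$ is any point with $\mathrm{dist}(0,\partial\Psi_k(x^{(k+1)}))\le\bar\varepsilon_k$, and $\lambda_E^{(k+1)}=\lambda_E^{(k)}+\beta_k(A_Ex^{(k+1)}-b_E)$, $\lambda_I^{(k+1)}=[\lambda_I^{(k)}+\beta_k(A_Ix^{(k+1)}-b_I)]_+$. $\partial$ is the convex subdifferential and $\mathrm{dist}(0,S)=\inf_{s\in S}\|s\|$. *)

theory Defs
  imports "HOL-Analysis.Analysis" "HOL-Library.Extended_Real"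
begin

definition ext_convex :: "('a::real_vector \<Rightarrow> ereal) \<Rightarrow> bool" where
  "ext_convex r \<longleftrightarrow> (\<forall>x y t. 0 \<le> t \<and> t \<le> 1 \<longrightarrow>
      r ((1 - t) *\<^sub>R x + t *\<^sub>R y) \<le> ereal (1 - t) * r x + ereal t * r y)"

definition proper_fun :: "('a \<Rightarrow> ereal) \<Rightarrow> bool" where
  "proper_fun r \<longleftrightarrow> (\<forall>x. r x \<noteq> -\<infinity>) \<and> (\<exists>x. r x \<noteq> \<infinity>)"

definition closed_fun :: "('a::topological_space \<Rightarrow> ereal) \<Rightarrow> bool" where
  "closed_fun r \<longleftrightarrow> closed {(x, a::real). r x \<le> ereal a}"

definition strongly_convex_on_univ :: "real \<Rightarrow> ('a::real_normed_vector \<Rightarrow> real) \<Rightarrow> bool" where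
  "strongly_convex_on_univ \<mu> f \<longleftrightarrow> (\<forall>x y t. 0 \<le> t \<and> t \<le> 1 \<longrightarrow>
      f ((1 - t) *\<^sub>R x + t *\<^sub>R y) \<le> (1 - t) * f x + t * f y - \<mu> / 2 * t * (1 - t) * (norm (x - y))\<^sup>2)"

text \<open>Convex subdifferential of an extended-real valued function (empty outside the domain).\<close>
definition subdiff :: "('a::real_inner \<Rightarrow> ereal) \<Rightarrow> 'a \<Rightarrow> 'a set" where
  "subdiff \<phi> x = {g. \<bar>\<phi> x\<bar> \<noteq> \<infinity> \<and> (\<forall>y. \<phi> y \<ge> \<phi> x + ereal (g \<bullet> (y - x)))}"

text \<open>dist(0,S) = inf of norms, with inf of the empty set = +infinity.\<close>
definition dist0 :: "'a::real_normed_vector set \<Rightarrow> ereal" where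
  "dist0 S = (INF s\<in>S. ereal (norm s))"

definition pos_part :: "real^'m \<Rightarrow> real^'m" where
  "pos_part v = (\<chi> i. max (v $ i) 0)"

definition Gfun :: "('a \<Rightarrow> real) \<Rightarrow> ('a \<Rightarrow> ereal) \<Rightarrow> 'a \<Rightarrow> ereal" where
  "Gfun f r x = ereal (f x) + r x"

definition aug_lag ::
  "(real^'n \<Rightarrow> real) \<Rightarrow> (real^'n \<Rightarrow> ereal) \<Rightarrow> real^'n^'e \<Rightarrow> real^'e \<Rightarrow> real^'n^'i \<Rightarrow> real^'i
    \<Rightarrow> real \<Rightarrow> real^'n \<Rightarrow> real^'e \<Rightarrow> real^'i \<Rightarrow> ereal" where
  "aug_lag f r Ae be Ai bi \<beta> x lme lmi =
     Gfun f r x + ereal (lme \<bullet> (Ae *v x - be) + \<beta> / 2 * (norm (Ae *v x - be))\<^sup>2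
       + 1 / (2 * \<beta>) * ((norm (pos_part (\<beta> *\<^sub>R (Ai *v x - bi) + lmi)))\<^sup>2 - (norm lmi)\<^sup>2))"

end

theory Submission
  imports Defs
begin

text \<open>
  The subproblem objective \<open>\<Psi>\<^sub>k = L\<^bsub>\<beta>\<^sub>k\<^esub>(\<cdot>, \<lambda>\<^sub>k) + \<rho>\<^sub>k/2 \<parallel>\<cdot> - x\<^sub>k\<parallel>\<^sup>2\<close> is \<open>\<rho>\<^sub>k\<close>-strongly
  convex, so every \<open>v \<in> \<partial>\<Psi>\<^sub>k(x\<^sub>k\<^sub>+\<^sub>1)\<close> satisfies
  \<open>\<Psi>\<^sub>k(x\<^sup>*) \<ge> \<Psi>\<^sub>k(x\<^sub>k\<^sub>+\<^sub>1) + \<langle>v, x\<^sup>* - x\<^sub>k\<^sub>+\<^sub>1\<rangle> + \<rho>\<^sub>k/2 \<parallel>x\<^sup>* - x\<^sub>k\<^sub>+\<^sub>1\<parallel>\<^sup>2\<close>.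
  At the feasible point \<open>x\<^sup>*\<close> the penalty part of the augmented Lagrangian is nonpositive; at
  \<open>x\<^sub>k\<^sub>+\<^sub>1\<close> it equals the change of \<open>\<parallel>\<lambda>\<parallel>\<^sup>2/(2\<beta>\<^sub>k)\<close> under the multiplier update; and the
  KKT conditions bound \<open>G(x\<^sup>*)\<close> by the Lagrangian at \<open>x\<^sub>k\<^sub>+\<^sub>1\<close>. Together with the
  monotonicity of \<open>[\<cdot>]\<^sub>+\<close> and \<open>\<lambda>\<^sup>*\<^sub>I \<ge> 0\<close> this gives
  \<open>\<beta>\<^sub>k\<rho>\<^sub>k\<parallel>x\<^sub>k\<^sub>+\<^sub>1 - x\<^sup>*\<parallel>\<^sup>2 + \<parallel>\<lambda>\<^sub>k\<^sub>+\<^sub>1 - \<lambda>\<^sup>*\<parallel>\<^sup>2 \<le> \<beta>\<^sub>k\<rho>\<^sub>k\<parallel>x\<^sub>k - x\<^sup>*\<parallel>\<^sup>2 + \<parallel>\<lambda>\<^sub>k - \<lambda>\<^sup>*\<parallel>\<^sup>2 + 2\<beta>\<^sub>k\<parallel>v\<parallel>\<parallel>x\<^sub>k\<^sub>+\<^sub>1 - x\<^sup>*\<parallel>\<close>.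
  The schedule keeps \<open>\<beta>\<^sub>k\<rho>\<^sub>k = \<beta>\<^sub>0\<rho>\<^sub>0\<close>, so both sides are squares of the same potential
  \<open>D\<^sub>k = \<surd>(\<beta>\<^sub>0\<rho>\<^sub>0\<parallel>x\<^sub>k - x\<^sup>*\<parallel>\<^sup>2 + \<parallel>\<lambda>\<^sub>k - \<lambda>\<^sup>*\<parallel>\<^sup>2)\<close>; as \<open>\<surd>(\<beta>\<^sub>0\<rho>\<^sub>0)\<parallel>x\<^sub>k\<^sub>+\<^sub>1 - x\<^sup>*\<parallel> \<le> D\<^sub>k\<^sub>+\<^sub>1\<close>,
  the quadratic recursion yields \<open>D\<^sub>k\<^sub>+\<^sub>1 \<le> D\<^sub>k + 2\<beta>\<^sub>k\<epsilon>\<^sub>k/\<surd>(\<beta>\<^sub>0\<rho>\<^sub>0)\<close>, which sums to the claim.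
\<close>

lemma power2_norm_convex_comb:
  fixes a b :: "'a::real_inner"
  shows "(norm ((1 - t) *\<^sub>R a + t *\<^sub>R b))\<^sup>2
    = (1 - t) * (norm a)\<^sup>2 + t * (norm b)\<^sup>2 - t * (1 - t) * (norm (a - b))\<^sup>2"
  by (simp add: power2_norm_eq_inner inner_add_left inner_add_right inner_diff_left
      inner_diff_right inner_commute algebra_simps)

lemma convex_on_power2_norm: "convex_on UNIV (\<lambda>v::'a::real_inner. (norm v)\<^sup>2)"
  by (rule convex_onI) (auto simp: power2_norm_convex_comb)

lemma convex_on_inner_left: "convex_on UNIV (\<lambda>v::'a::real_inner. l \<bullet> v)"
  by (rule convex_onI) (auto simp: inner_add_right)

lemma power2_norm_eq_sum: "(norm (v::real^'m))\<^sup>2 = (\<Sum>i\<in>UNIV. (v $ i)\<^sup>2)"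
  unfolding power2_norm_eq_inner inner_vec_def by (simp add: power2_eq_square)

lemma power2_max_0_convex:
  fixes a b t :: real
  assumes "0 \<le> t" "t \<le> 1"
  shows "(max ((1 - t) * a + t * b) 0)\<^sup>2 \<le> (1 - t) * (max a 0)\<^sup>2 + t * (max b 0)\<^sup>2"
proof -
  have "max ((1 - t) * a + t * b) 0 \<le> (1 - t) * max a 0 + t * max b 0"
    using assms by (simp add: mult_left_mono add_mono)
  then have "(max ((1 - t) * a + t * b) 0)\<^sup>2 \<le> ((1 - t) * max a 0 + t * max b 0)\<^sup>2"
    by (simp add: power_mono)
  also have "\<dots> \<le> (1 - t) * (max a 0)\<^sup>2 + t * (max b 0)\<^sup>2"
    using convex_onD[OF convex_power2, of t "max a 0" "max b 0"] assms by simp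
  finally show ?thesis .
qed

lemma convex_on_power2_norm_pos_part: "convex_on UNIV (\<lambda>v. (norm (pos_part (v::real^'m)))\<^sup>2)"
  by (rule convex_onI)
    (simp_all add: power2_norm_eq_sum pos_part_def sum_distrib_left sum.distrib[symmetric]
      sum_mono power2_max_0_convex)

lemma le_pos_part: "v $ i \<le> pos_part v $ i"
  by (simp add: pos_part_def)

lemma convex_on_comp_affine:
  fixes g :: "'b::real_vector \<Rightarrow> real" and a :: "'a::real_vector \<Rightarrow> 'b"
  assumes "convex_on UNIV g"
    and "\<And>u w t. a ((1 - t) *\<^sub>R u + t *\<^sub>R w) = (1 - t) *\<^sub>R a u + t *\<^sub>R a w"
  shows "convex_on UNIV (\<lambda>z. g (a z))"
  by (intro convex_onI) (simp_all add: assms(2) convex_onD[OF assms(1)])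

lemma strongly_convex_on_univ_add_power2_dist:
  fixes g :: "'a::real_inner \<Rightarrow> real"
  assumes "convex_on UNIV g"
  shows "strongly_convex_on_univ \<rho> (\<lambda>z. g z + \<rho> / 2 * (norm (z - c))\<^sup>2)"
  unfolding strongly_convex_on_univ_def
proof safe
  fix x y :: 'a and t :: real
  assume t: "0 \<le> t" "t \<le> 1"
  have "(1 - t) *\<^sub>R x + t *\<^sub>R y - c = (1 - t) *\<^sub>R (x - c) + t *\<^sub>R (y - c)"
    by (simp add: algebra_simps)
  then have sq: "(norm ((1 - t) *\<^sub>R x + t *\<^sub>R y - c))\<^sup>2
      = (1 - t) * (norm (x - c))\<^sup>2 + t * (norm (y - c))\<^sup>2 - t * (1 - t) * (norm (x - y))\<^sup>2"
    using power2_norm_convex_comb[of t "x - c" "y - c"] by simp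
  have "g ((1 - t) *\<^sub>R x + t *\<^sub>R y) \<le> (1 - t) * g x + t * g y"
    using convex_onD[OF assms] t by simp
  then show "g ((1 - t) *\<^sub>R x + t *\<^sub>R y) + \<rho> / 2 * (norm ((1 - t) *\<^sub>R x + t *\<^sub>R y - c))\<^sup>2
      \<le> (1 - t) * (g x + \<rho> / 2 * (norm (x - c))\<^sup>2) + t * (g y + \<rho> / 2 * (norm (y - c))\<^sup>2)
        - \<rho> / 2 * t * (1 - t) * (norm (x - y))\<^sup>2"
    unfolding sq by (simp add: field_simps)
qed

lemma subdiff_strongly_convex_ineq:
  fixes r :: "'a::real_inner \<Rightarrow> ereal" and F :: "'a \<Rightarrow> real"
  assumes r: "ext_convex r" and F: "strongly_convex_on_univ \<mu> F"
    and v: "v \<in> subdiff (\<lambda>z. r z + ereal (F z)) p"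
  shows "r p + ereal (F p + v \<bullet> (y - p) + \<mu> / 2 * (norm (y - p))\<^sup>2) \<le> r y + ereal (F y)"
proof -
  from v have fin: "\<bar>r p + ereal (F p)\<bar> \<noteq> \<infinity>"
    and sg: "\<And>z. r p + ereal (F p) + ereal (v \<bullet> (z - p)) \<le> r z + ereal (F z)"
    by (auto simp: subdiff_def)
  obtain rp where rp: "r p = ereal rp" using fin by (cases "r p") auto
  consider "r y = \<infinity>" | ry where "r y = ereal ry"
    using sg[of y] rp by (cases "r y") auto
  then show ?thesis
  proof cases
    case 2
    have shrink: "(1 - t) * (\<mu> / 2 * (norm (y - p))\<^sup>2) \<le> ry + F y - rp - F p - v \<bullet> (y - p)"
      if t: "0 < t" "t < 1" for t
    proof -
      define z where "z = (1 - t) *\<^sub>R p + t *\<^sub>R y"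
      have "z - p = t *\<^sub>R (y - p)"
        by (simp add: z_def algebra_simps)
      then have lower: "ereal (rp + F p + t * (v \<bullet> (y - p))) \<le> r z + ereal (F z)"
        using sg[of z] rp by simp
      have "r z \<le> ereal (1 - t) * r p + ereal t * r y"
        using r t unfolding ext_convex_def z_def by simp
      then have upper: "r z \<le> ereal ((1 - t) * rp + t * ry)"
        by (simp add: rp 2)
      obtain rz where "r z = ereal rz"
        using lower upper by (cases "r z") auto
      with lower upper have rz: "rp + F p + t * (v \<bullet> (y - p)) \<le> rz + F z" "rz \<le> (1 - t) * rp + t * ry"
        by simp_all
      have "F z \<le> (1 - t) * F p + t * F y - \<mu> / 2 * t * (1 - t) * (norm (p - y))\<^sup>2"
        using F t unfolding strongly_convex_on_univ_def z_def by auto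
      then have "F z \<le> (1 - t) * F p + t * F y - \<mu> / 2 * t * (1 - t) * (norm (y - p))\<^sup>2"
        by (simp add: norm_minus_commute)
      then have "t * ((1 - t) * (\<mu> / 2 * (norm (y - p))\<^sup>2))
          \<le> t * (ry + F y - rp - F p - v \<bullet> (y - p))"
        using rz by (simp add: algebra_simps)
      then show ?thesis using t by simp
    qed
    have "\<mu> / 2 * (norm (y - p))\<^sup>2 \<le> ry + F y - rp - F p - v \<bullet> (y - p)"
    proof (rule field_le_mult_one_interval)
      fix s :: real
      assume "0 < s" "s < 1"
      then show "s * (\<mu> / 2 * (norm (y - p))\<^sup>2) \<le> ry + F y - rp - F p - v \<bullet> (y - p)"
        using shrink[of "1 - s"] by simp
    qed
    then show ?thesis using rp 2 by simp
  qed (use rp in simp)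
qed

lemma dist0_le_imp_le:
  assumes "dist0 S \<le> ereal \<epsilon>" "0 \<le> c" "\<And>v. v \<in> S \<Longrightarrow> a \<le> b + c * norm v"
  shows "a \<le> b + c * \<epsilon>"
proof (cases "c = 0")
  case True
  have "S \<noteq> {}" using assms(1) by (auto simp: dist0_def top_ereal_def)
  then show ?thesis using True assms(3) by auto
next
  case False
  then have "(a - b) / c \<le> norm v" if "v \<in> S" for v
    using assms(2) assms(3)[OF that] by (simp add: divide_le_eq mult.commute)
  then have "ereal ((a - b) / c) \<le> dist0 S"
    unfolding dist0_def by (intro INF_greatest) simp
  then have "(a - b) / c \<le> \<epsilon>"
    using assms(1) order_trans ereal_less_eq(3) by blast
  then show ?thesis using False assms(2) by (simp add: divide_le_eq mult.commute)
qed

lemma le_add_of_power2_le: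
  fixes E D a :: real
  assumes "0 \<le> E" "0 \<le> D" "0 \<le> a" "E\<^sup>2 \<le> D\<^sup>2 + a * E"
  shows "E \<le> a + D"
proof (rule ccontr)
  assume "\<not> E \<le> a + D"
  then have gap: "D < E - a" by simp
  have "D * D \<le> D * (E - a)"
    using gap assms(2) by (simp add: mult_left_mono)
  also have "\<dots> < E * (E - a)"
    using gap assms(2,3) by (intro mult_strict_right_mono) simp_all
  finally show False
    using assms(4) by (simp add: power2_eq_square algebra_simps)
qed

lemma sqrt_quadratic_recursion:
  fixes c N M P a :: real
  assumes c: "0 < c" and nonneg: "0 \<le> N" "0 \<le> M" "0 \<le> P" "0 \<le> a"
    and rec: "c * N\<^sup>2 + M \<le> P + a * N"
  shows "sqrt (c * N\<^sup>2 + M) \<le> a / sqrt c + sqrt P"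
proof -
  define E where "E = sqrt (c * N\<^sup>2 + M)"
  have E: "0 \<le> E" "E\<^sup>2 = c * N\<^sup>2 + M"
    using c nonneg by (simp_all add: E_def)
  have "(sqrt c * N)\<^sup>2 = c * N\<^sup>2"
    using c by (simp add: power_mult_distrib)
  then have "(sqrt c * N)\<^sup>2 \<le> E\<^sup>2"
    using E(2) nonneg(2) by linarith
  then have "sqrt c * N \<le> E"
    using E(1) by (rule power2_le_imp_le)
  then have "a / sqrt c * (sqrt c * N) \<le> a / sqrt c * E"
    using nonneg(4) c by (intro mult_left_mono) simp_all
  moreover have "a / sqrt c * (sqrt c * N) = a * N"
    using c by simp
  moreover have "(sqrt P)\<^sup>2 = P"
    using nonneg(3) by simp
  ultimately have sq: "E\<^sup>2 \<le> (sqrt P)\<^sup>2 + a / sqrt c * E"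
    using E(2) rec by linarith
  have "E \<le> a / sqrt c + sqrt P"
    by (rule le_add_of_power2_le[OF E(1) _ _ sq]) (use c nonneg in simp_all)
  then show ?thesis
    by (simp add: E_def)
qed

lemma le_sum_of_increments:
  fixes D a :: "nat \<Rightarrow> real"
  assumes "\<And>k. D (Suc k) \<le> a k + D k"
  shows "D (Suc k) \<le> (\<Sum>i\<le>k. a i) + D 0"
proof (induction k)
  case (Suc k)
  then show ?case using assms[of "Suc k"] by simp
qed (use assms[of 0] in simp)

definition aug_penalty ::
  "real^'n^'e \<Rightarrow> real^'e \<Rightarrow> real^'n^'i \<Rightarrow> real^'i \<Rightarrow> real \<Rightarrow> real^'n \<Rightarrow> real^'e \<Rightarrow> real^'i \<Rightarrow> real"
  where
  "aug_penalty Ae be Ai bi \<beta> x lme lmi =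
     lme \<bullet> (Ae *v x - be) + \<beta> / 2 * (norm (Ae *v x - be))\<^sup>2
       + 1 / (2 * \<beta>) * ((norm (pos_part (\<beta> *\<^sub>R (Ai *v x - bi) + lmi)))\<^sup>2 - (norm lmi)\<^sup>2)"

lemma aug_lag_eq_add_penalty:
  "aug_lag f r Ae be Ai bi \<beta> x lme lmi = r x + ereal (f x + aug_penalty Ae be Ai bi \<beta> x lme lmi)"
  unfolding aug_lag_def Gfun_def aug_penalty_def by (cases "r x") simp_all

lemma matrix_vector_affine_convex_comb:
  fixes M :: "real^'n^'m"
  shows "M *v ((1 - t) *\<^sub>R u + t *\<^sub>R w) - c = (1 - t) *\<^sub>R (M *v u - c) + t *\<^sub>R (M *v w - c)"
  by (simp add: matrix_vector_right_distrib matrix_vector_mult_scaleR algebra_simps)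

lemma convex_on_aug_penalty:
  assumes "0 < \<beta>"
  shows "convex_on UNIV (\<lambda>x. aug_penalty Ae be Ai bi \<beta> x lme lmi)"
proof -
  have eq: "convex_on UNIV (\<lambda>x. lme \<bullet> (Ae *v x - be) + \<beta> / 2 * (norm (Ae *v x - be))\<^sup>2)"
    using assms
    by (intro convex_on_add convex_on_cmul convex_on_comp_affine[OF convex_on_inner_left]
        convex_on_comp_affine[OF convex_on_power2_norm] matrix_vector_affine_convex_comb) simp_all
  have "\<beta> *\<^sub>R (Ai *v ((1 - t) *\<^sub>R u + t *\<^sub>R w) - bi) + lmi
      = (1 - t) *\<^sub>R (\<beta> *\<^sub>R (Ai *v u - bi) + lmi) + t *\<^sub>R (\<beta> *\<^sub>R (Ai *v w - bi) + lmi)" for t u w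
    unfolding matrix_vector_affine_convex_comb by (simp add: algebra_simps)
  then have "convex_on UNIV (\<lambda>x. (norm (pos_part (\<beta> *\<^sub>R (Ai *v x - bi) + lmi)))\<^sup>2)"
    by (rule convex_on_comp_affine[OF convex_on_power2_norm_pos_part])
  then have ineq: "convex_on UNIV
      (\<lambda>x. 1 / (2 * \<beta>) * ((norm (pos_part (\<beta> *\<^sub>R (Ai *v x - bi) + lmi)))\<^sup>2 - (norm lmi)\<^sup>2))"
    using assms by (intro convex_on_cmul convex_on_diff) (simp_all add: concave_on_const)
  show ?thesis
    unfolding aug_penalty_def by (rule convex_on_add[OF eq ineq])
qed

lemma power2_norm_pos_part_add_nonpos_le:
  fixes s l :: "real^'m"
  assumes "\<And>i. s $ i \<le> 0"
  shows "(norm (pos_part (s + l)))\<^sup>2 \<le> (norm l)\<^sup>2"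
  unfolding power2_norm_eq_sum pos_part_def
proof (rule sum_mono)
  fix i
  show "((\<chi> i. max ((s + l) $ i) 0) $ i)\<^sup>2 \<le> (l $ i)\<^sup>2"
    using assms[of i] by (auto simp: max_def intro!: power_mono abs_le_square_iff[THEN iffD2])
qed

lemma aug_penalty_nonpos_of_feasible:
  assumes "Ae *v x = be" "\<And>i. (Ai *v x) $ i \<le> bi $ i" "0 < \<beta>"
  shows "aug_penalty Ae be Ai bi \<beta> x lme lmi \<le> 0"
proof -
  have "(norm (pos_part (\<beta> *\<^sub>R (Ai *v x - bi) + lmi)))\<^sup>2 \<le> (norm lmi)\<^sup>2"
    using assms(2,3) by (intro power2_norm_pos_part_add_nonpos_le) (simp add: mult_nonneg_nonpos)
  then have "1 / (2 * \<beta>) * ((norm (pos_part (\<beta> *\<^sub>R (Ai *v x - bi) + lmi)))\<^sup>2 - (norm lmi)\<^sup>2) \<le> 0"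
    using assms(3) by (intro mult_nonneg_nonpos) simp_all
  then show ?thesis
    using assms(1) by (simp add: aug_penalty_def)
qed

lemma aug_penalty_eq_multiplier_update:
  assumes "\<beta> \<noteq> 0"
  shows "aug_penalty Ae be Ai bi \<beta> x lme lmi
    = ((norm (lme + \<beta> *\<^sub>R (Ae *v x - be)))\<^sup>2 - (norm lme)\<^sup>2
       + (norm (pos_part (lmi + \<beta> *\<^sub>R (Ai *v x - bi))))\<^sup>2 - (norm lmi)\<^sup>2) / (2 * \<beta>)"
proof -
  define e where "e = Ae *v x - be"
  have "(norm (lme + \<beta> *\<^sub>R e))\<^sup>2 = (norm lme)\<^sup>2 + 2 * \<beta> * (lme \<bullet> e) + \<beta>\<^sup>2 * (norm e)\<^sup>2"
    using dot_norm[of lme "\<beta> *\<^sub>R e"] by (simp add: power_mult_distrib)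
  then show ?thesis
    using assms unfolding aug_penalty_def e_def[symmetric]
    by (simp add: add.commute field_simps power2_eq_square)
qed

lemma power2_norm_diff_sub_power2_norm_diff:
  fixes a b c :: "'a::real_inner"
  shows "(norm (a - c))\<^sup>2 - (norm (b - c))\<^sup>2 = (norm a)\<^sup>2 - (norm b)\<^sup>2 - 2 * (c \<bullet> (a - b))"
  by (simp add: power2_norm_eq_inner inner_diff_left inner_diff_right inner_commute)

lemma power2_norm_pos_part_update_diff_le:
  fixes m e l :: "real^'m"
  assumes "\<And>i. 0 \<le> l $ i"
  shows "(norm (pos_part (m + \<beta> *\<^sub>R e) - l))\<^sup>2 - (norm (m - l))\<^sup>2
    \<le> (norm (pos_part (m + \<beta> *\<^sub>R e)))\<^sup>2 - (norm m)\<^sup>2 - 2 * \<beta> * (l \<bullet> e)"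
proof -
  have "l \<bullet> (\<beta> *\<^sub>R e) \<le> l \<bullet> (pos_part (m + \<beta> *\<^sub>R e) - m)"
    unfolding inner_vec_def
  proof (rule sum_mono)
    fix i
    show "l $ i \<bullet> (\<beta> *\<^sub>R e) $ i \<le> l $ i \<bullet> (pos_part (m + \<beta> *\<^sub>R e) - m) $ i"
      using le_pos_part[of "m + \<beta> *\<^sub>R e" i] assms[of i] by (simp add: mult_left_mono)
  qed
  then show ?thesis
    unfolding power2_norm_diff_sub_power2_norm_diff by simp
qed

locale linear_constrained_kkt =
  fixes f :: "real^'n \<Rightarrow> real" and r :: "real^'n \<Rightarrow> ereal"
    and Aeq :: "real^'n^'e" and beq :: "real^'e" and Ain :: "real^'n^'i" and bin :: "real^'i"
    and xs :: "real^'n" and lEs :: "real^'e" and lIs :: "real^'i"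
  assumes f_conv: "convex_on UNIV f" and r_conv: "ext_convex r"
    and KKT_stat: "\<exists>g\<in>subdiff (Gfun f r) xs. g + transpose Aeq *v lEs + transpose Ain *v lIs = 0"
    and KKT_eq: "Aeq *v xs = beq"
    and KKT_ineq: "\<And>i. (Ain *v xs) $ i \<le> bin $ i"
    and KKT_mult: "\<And>i. lIs $ i \<ge> 0"
    and KKT_compl: "lIs \<bullet> (Ain *v xs - bin) = 0"
begin

lemma r_finite_at_solution: obtains rs where "r xs = ereal rs"
  using KKT_stat by (cases "r xs") (auto simp: subdiff_def Gfun_def)

lemma Lagrangian_lower_bound:
  "Gfun f r xs \<le> Gfun f r z + ereal (lEs \<bullet> (Aeq *v z - beq) + lIs \<bullet> (Ain *v z - bin))"
proof -
  obtain g where g: "g \<in> subdiff (Gfun f r) xs"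
    and g0: "g + transpose Aeq *v lEs + transpose Ain *v lIs = 0"
    using KKT_stat by blast
  have "g = - (transpose Aeq *v lEs + transpose Ain *v lIs)"
    using g0 by (metis add.assoc eq_neg_iff_add_eq_0)
  then have "g \<bullet> (z - xs) = - (lEs \<bullet> (Aeq *v (z - xs))) - lIs \<bullet> (Ain *v (z - xs))"
    unfolding transpose_matrix_vector
    by (simp only: inner_diff_left inner_minus_left dot_lmul_matrix minus_add_distrib inner_add_left)
  also have "\<dots> = - (lEs \<bullet> (Aeq *v z - beq) + lIs \<bullet> (Ain *v z - bin))"
    using KKT_eq KKT_compl
    by (simp add: matrix_vector_mult_diff_distrib inner_diff_right algebra_simps)
  finally have "g \<bullet> (z - xs) = - (lEs \<bullet> (Aeq *v z - beq) + lIs \<bullet> (Ain *v z - bin))" .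
  moreover obtain rs where "r xs = ereal rs" by (rule r_finite_at_solution)
  moreover have "Gfun f r xs + ereal (g \<bullet> (z - xs)) \<le> Gfun f r z"
    using g by (auto simp: subdiff_def)
  ultimately show ?thesis
    by (cases "r z") (simp_all add: Gfun_def)
qed

lemma ipalm_primal_estimate:
  assumes \<beta>: "0 < \<beta>" and \<rho>: "0 < \<rho>"
    and v: "v \<in> subdiff (\<lambda>z. aug_lag f r Aeq beq Ain bin \<beta> z lme lmi + ereal (\<rho> / 2 * (norm (z - x))\<^sup>2)) x'"
  shows "aug_penalty Aeq beq Ain bin \<beta> x' lme lmi + \<rho> / 2 * (norm (x' - xs))\<^sup>2
    \<le> \<rho> / 2 * (norm (x - xs))\<^sup>2 + lEs \<bullet> (Aeq *v x' - beq) + lIs \<bullet> (Ain *v x' - bin)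
      + norm (x' - xs) * norm v"
proof -
  define pen where "pen z = aug_penalty Aeq beq Ain bin \<beta> z lme lmi" for z
  define F where "F z = f z + pen z + \<rho> / 2 * (norm (z - x))\<^sup>2" for z
  have \<Psi>: "(\<lambda>z. aug_lag f r Aeq beq Ain bin \<beta> z lme lmi + ereal (\<rho> / 2 * (norm (z - x))\<^sup>2))
      = (\<lambda>z. r z + ereal (F z))"
    by (simp add: aug_lag_eq_add_penalty F_def pen_def add.assoc)
  have "strongly_convex_on_univ \<rho> F"
    unfolding F_def pen_def
    by (rule strongly_convex_on_univ_add_power2_dist convex_on_add[OF f_conv convex_on_aug_penalty[OF \<beta>]])+
  then have sc: "r x' + ereal (F x' + v \<bullet> (xs - x') + \<rho> / 2 * (norm (xs - x'))\<^sup>2) \<le> r xs + ereal (F xs)"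
    using r_conv v unfolding \<Psi> by (intro subdiff_strongly_convex_ineq)
  obtain rx' where rx': "r x' = ereal rx'"
    using v unfolding \<Psi> by (cases "r x'") (auto simp: subdiff_def)
  obtain rs where rs: "r xs = ereal rs"
    by (rule r_finite_at_solution)
  have "rx' + F x' + v \<bullet> (xs - x') + \<rho> / 2 * (norm (xs - x'))\<^sup>2 \<le> rs + F xs"
    using sc rx' rs by simp
  moreover have "f xs + rs \<le> f x' + rx' + (lEs \<bullet> (Aeq *v x' - beq) + lIs \<bullet> (Ain *v x' - bin))"
    using Lagrangian_lower_bound[of x'] rx' rs by (simp add: Gfun_def)
  moreover have "pen xs \<le> 0"
    unfolding pen_def using KKT_eq KKT_ineq \<beta> by (rule aug_penalty_nonpos_of_feasible)
  moreover have "- (v \<bullet> (xs - x')) \<le> norm (x' - xs) * norm v"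
    using norm_cauchy_schwarz[of v "x' - xs"] by (simp add: inner_diff_right mult.commute)
  moreover have "F xs = f xs + pen xs + \<rho> / 2 * (norm (x - xs))\<^sup>2"
    by (simp add: F_def norm_minus_commute)
  moreover have "F x' \<ge> f x' + pen x'"
    using \<rho> by (simp add: F_def)
  ultimately show ?thesis
    by (simp add: pen_def norm_minus_commute)
qed

lemma ipalm_step_estimate:
  assumes \<beta>: "0 < \<beta>" and \<rho>: "0 < \<rho>"
    and v: "v \<in> subdiff (\<lambda>z. aug_lag f r Aeq beq Ain bin \<beta> z lme lmi + ereal (\<rho> / 2 * (norm (z - x))\<^sup>2)) x'"
  shows "\<beta> * \<rho> * (norm (x' - xs))\<^sup>2 + (norm (lme + \<beta> *\<^sub>R (Aeq *v x' - beq) - lEs))\<^sup>2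
      + (norm (pos_part (lmi + \<beta> *\<^sub>R (Ain *v x' - bin)) - lIs))\<^sup>2
    \<le> \<beta> * \<rho> * (norm (x - xs))\<^sup>2 + (norm (lme - lEs))\<^sup>2 + (norm (lmi - lIs))\<^sup>2
      + 2 * \<beta> * norm (x' - xs) * norm v"
proof -
  define eE where "eE = Aeq *v x' - beq"
  define eI where "eI = Ain *v x' - bin"
  define pen where "pen = aug_penalty Aeq beq Ain bin \<beta> x' lme lmi"
  have "2 * \<beta> * (pen + \<rho> / 2 * (norm (x' - xs))\<^sup>2)
      \<le> 2 * \<beta> * (\<rho> / 2 * (norm (x - xs))\<^sup>2 + lEs \<bullet> eE + lIs \<bullet> eI + norm (x' - xs) * norm v)"
    using ipalm_primal_estimate[OF assms] \<beta>
    unfolding pen_def eE_def eI_def by (intro mult_left_mono) simp_all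
  then have "2 * \<beta> * pen + \<beta> * \<rho> * (norm (x' - xs))\<^sup>2 \<le> \<beta> * \<rho> * (norm (x - xs))\<^sup>2
      + 2 * \<beta> * (lEs \<bullet> eE) + 2 * \<beta> * (lIs \<bullet> eI) + 2 * \<beta> * norm (x' - xs) * norm v"
    by (simp add: algebra_simps)
  moreover have "2 * \<beta> * pen = (norm (lme + \<beta> *\<^sub>R eE))\<^sup>2 - (norm lme)\<^sup>2
      + (norm (pos_part (lmi + \<beta> *\<^sub>R eI)))\<^sup>2 - (norm lmi)\<^sup>2"
    using \<beta> by (simp add: pen_def aug_penalty_eq_multiplier_update eE_def eI_def)
  moreover have "(norm (lme + \<beta> *\<^sub>R eE - lEs))\<^sup>2 - (norm (lme - lEs))\<^sup>2
      = (norm (lme + \<beta> *\<^sub>R eE))\<^sup>2 - (norm lme)\<^sup>2 - 2 * \<beta> * (lEs \<bullet> eE)"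
    by (simp add: power2_norm_diff_sub_power2_norm_diff)
  moreover have "(norm (pos_part (lmi + \<beta> *\<^sub>R eI) - lIs))\<^sup>2 - (norm (lmi - lIs))\<^sup>2
      \<le> (norm (pos_part (lmi + \<beta> *\<^sub>R eI)))\<^sup>2 - (norm lmi)\<^sup>2 - 2 * \<beta> * (lIs \<bullet> eI)"
    using KKT_mult by (rule power2_norm_pos_part_update_diff_le)
  ultimately show ?thesis
    unfolding eE_def eI_def by linarith
qed

end

theorem lemma5p3:
  fixes f :: "real^'n \<Rightarrow> real" and gradf :: "real^'n \<Rightarrow> real^'n"
    and r :: "real^'n \<Rightarrow> ereal"
    and Aeq :: "real^'n^'e" and beq :: "real^'e" and Ain :: "real^'n^'i" and bin :: "real^'i"
    and Lf \<mu> :: real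
    and xs :: "real^'n" and lEs :: "real^'e" and lIs :: "real^'i"
    and x :: "nat \<Rightarrow> real^'n" and lE :: "nat \<Rightarrow> real^'e" and lI :: "nat \<Rightarrow> real^'i"
    and \<beta> \<rho> \<epsilon> :: "nat \<Rightarrow> real" and \<beta>0 \<rho>0 \<sigma> :: real
  assumes f_conv: "convex_on UNIV f"
    and f_grad: "\<And>z. (f has_derivative (\<lambda>h. gradf z \<bullet> h)) (at z)"
    and f_lip: "\<And>y z. norm (gradf y - gradf z) \<le> Lf * norm (y - z)"
    and mu_nonneg: "\<mu> \<ge> 0"
    and f_strong: "strongly_convex_on_univ \<mu> f"
    and r_proper: "proper_fun r" and r_closed: "closed_fun r" and r_conv: "ext_convex r"
    and KKT_stat: "\<exists>g\<in>subdiff (Gfun f r) xs. g + transpose Aeq *v lEs + transpose Ain *v lIs = 0"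
    and KKT_eq: "Aeq *v xs = beq"
    and KKT_ineq: "\<And>i. (Ain *v xs) $ i \<le> bin $ i"
    and KKT_mult: "\<And>i. lIs $ i \<ge> 0"
    and KKT_compl: "lIs \<bullet> (Ain *v xs - bin) = 0"
    and x0_dom: "Gfun f r (x 0) \<noteq> \<infinity>"
    and eps_nonneg: "\<And>k. \<epsilon> k \<ge> 0"
    and beta0_pos: "\<beta>0 > 0" and rho0_pos: "\<rho>0 > 0" and sigma_gt: "\<sigma> > 1"
    and beta_def: "\<And>k. \<beta> k = \<beta>0 * \<sigma> ^ k"
    and rho_def: "\<And>k. \<rho> k = \<rho>0 / \<sigma> ^ k"
    and x_step: "\<And>k. dist0 (subdiff (\<lambda>z. aug_lag f r Aeq beq Ain bin (\<beta> k) z (lE k) (lI k)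
                         + ereal (\<rho> k / 2 * (norm (z - x k))\<^sup>2)) (x (Suc k))) \<le> ereal (\<epsilon> k)"
    and lE_step: "\<And>k. lE (Suc k) = lE k + \<beta> k *\<^sub>R (Aeq *v x (Suc k) - beq)"
    and lI_step: "\<And>k. lI (Suc k) = pos_part (lI k + \<beta> k *\<^sub>R (Ain *v x (Suc k) - bin))"
  shows "sqrt (\<beta>0 * \<rho>0 * (norm (x (Suc k) - xs))\<^sup>2
               + (norm (lE (Suc k) - lEs))\<^sup>2 + (norm (lI (Suc k) - lIs))\<^sup>2)
         \<le> (\<Sum>i\<le>k. 2 * \<beta> i * \<epsilon> i / sqrt (\<beta>0 * \<rho>0))
           + sqrt (\<beta>0 * \<rho>0 * (norm (x 0 - xs))\<^sup>2
               + (norm (lE 0 - lEs))\<^sup>2 + (norm (lI 0 - lIs))\<^sup>2)"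
proof -
  interpret linear_constrained_kkt f r Aeq beq Ain bin xs lEs lIs
    using f_conv r_conv KKT_stat KKT_eq KKT_ineq KKT_mult KKT_compl by unfold_locales
  define c where "c = \<beta>0 * \<rho>0"
  have c: "0 < c"
    using beta0_pos rho0_pos by (simp add: c_def)
  have \<beta>\<rho>: "0 < \<beta> k" "0 < \<rho> k" "\<beta> k * \<rho> k = c" for k
    using beta0_pos rho0_pos sigma_gt by (simp_all add: beta_def rho_def c_def)
  define M where "M k = (norm (lE k - lEs))\<^sup>2 + (norm (lI k - lIs))\<^sup>2" for k
  define D where "D k = sqrt (c * (norm (x k - xs))\<^sup>2 + M k)" for k
  have "c * (norm (x (Suc k) - xs))\<^sup>2 + M (Suc k)
      \<le> (c * (norm (x k - xs))\<^sup>2 + M k) + 2 * \<beta> k * norm (x (Suc k) - xs) * \<epsilon> k" for k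
    unfolding M_def lE_step lI_step \<beta>\<rho>(3)[of k, symmetric] add.assoc[symmetric]
    by (rule dist0_le_imp_le[OF x_step])
      (use \<beta>\<rho>(1)[of k] ipalm_step_estimate[OF \<beta>\<rho>(1,2)] in auto)
  then have "D (Suc k) \<le> 2 * \<beta> k * \<epsilon> k / sqrt c + D k" for k
    unfolding D_def using c \<beta>\<rho>(1)[of k] eps_nonneg[of k]
    by (intro sqrt_quadratic_recursion) (auto simp: M_def algebra_simps)
  then show ?thesis
    using le_sum_of_increments[of D] by (simp add: D_def M_def c_def add.assoc)
qed

end
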